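(* Every Margulis spacetime with a nonabelian fundamental group is orientable.
   Context: Let $\mathbb E^{2,1}$ be three-dimensional Minkowski space, the affine space modeled on $\mathbb R^3$ with a Lorentzian inner product of signature $(2,1)$; its isometries are affine maps with linear part in $\mathrm O(2,1)$. A Margulis spacetime is a quotient $M=\mathbb E^{2,1}/\Gamma$, where $\Gamma$ is a free group of Lorentzian isometries acting properly, freely and discretely on $\mathbb E^{2,1}$ (equivalently a geodesically complete flat Lorentzian $3$-manifold with free fundamental group). *)

theory Defs
  imports "HOL-Analysis.Analysis"
begin

type_synonym pt = "real ^ 3"

definition lor :: "pt \<Rightarrow> pt \<Rightarrow> real" where
  "lor x y = x$1 * y$1 + x$2 * y$2 - x$3 * y$3"

definition O21 :: "(real ^ 3 ^ 3) set" where
  "O21 = {A. \<forall>x y. lor (A *v x) (A *v y) = lor x y}"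

definition lorentz_isometry :: "(pt \<Rightarrow> pt) \<Rightarrow> bool" where
  "lorentz_isometry f \<longleftrightarrow> (\<exists>A b. A \<in> O21 \<and> f = (\<lambda>x. A *v x + b))"

definition isometry_group :: "(pt \<Rightarrow> pt) set \<Rightarrow> bool" where
  "isometry_group G \<longleftrightarrow> (\<forall>g\<in>G. lorentz_isometry g) \<and> id \<in> G \<and>
     (\<forall>g\<in>G. \<forall>h\<in>G. g \<circ> h \<in> G) \<and> (\<forall>g\<in>G. inv g \<in> G)"

fun word_eval :: "(bool \<times> (pt \<Rightarrow> pt)) list \<Rightarrow> (pt \<Rightarrow> pt)" where
  "word_eval [] = id"
| "word_eval ((e, s) # w) = (if e then s else inv s) \<circ> word_eval w"

fun reduced_word :: "(bool \<times> 'a) list \<Rightarrow> bool" where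
  "reduced_word ((e, s) # (e', s') # w) =
     (\<not> (s = s' \<and> e \<noteq> e') \<and> reduced_word ((e', s') # w))"
| "reduced_word _ = True"

definition free_on :: "(pt \<Rightarrow> pt) set \<Rightarrow> (pt \<Rightarrow> pt) set \<Rightarrow> bool" where
  "free_on S G \<longleftrightarrow> S \<subseteq> G \<and>
     G = {word_eval w | w. set (map snd w) \<subseteq> S} \<and>
     (\<forall>w. set (map snd w) \<subseteq> S \<and> reduced_word w \<and> w \<noteq> [] \<longrightarrow> word_eval w \<noteq> id)"

definition free_group :: "(pt \<Rightarrow> pt) set \<Rightarrow> bool" where
  "free_group G \<longleftrightarrow> (\<exists>S. free_on S G)"

definition acts_properly :: "(pt \<Rightarrow> pt) set \<Rightarrow> bool" where
  "acts_properly G \<longleftrightarrow> (\<forall>K. compact K \<longrightarrow> finite {g\<in>G. g ` K \<inter> K \<noteq> {}})"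

definition acts_freely :: "(pt \<Rightarrow> pt) set \<Rightarrow> bool" where
  "acts_freely G \<longleftrightarrow> (\<forall>g\<in>G. \<forall>x. g x = x \<longrightarrow> g = id)"

text \<open>Gamma defines a Margulis spacetime E^{2,1}/Gamma.\<close>
definition margulis_group :: "(pt \<Rightarrow> pt) set \<Rightarrow> bool" where
  "margulis_group G \<longleftrightarrow> isometry_group G \<and> free_group G \<and> acts_properly G \<and> acts_freely G"

definition nonabelian :: "(pt \<Rightarrow> pt) set \<Rightarrow> bool" where
  "nonabelian G \<longleftrightarrow> (\<exists>g\<in>G. \<exists>h\<in>G. g \<circ> h \<noteq> h \<circ> g)"

text \<open>E^{2,1}/Gamma is orientable iff every element of Gamma preserves orientation,
  i.e. its linear part has determinant 1.\<close>
definition orientable_quotient :: "(pt \<Rightarrow> pt) set \<Rightarrow> bool" where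
  "orientable_quotient G \<longleftrightarrow>
     (\<forall>g\<in>G. \<exists>A b. g = (\<lambda>x. A *v x + b) \<and> det A > 0)"

end

theory Submission
  imports Defs
begin

text \<open>
  Suppose some \<open>g \<in> \<Gamma>\<close> reverses orientation, so its linear part \<open>A \<in> O(2,1)\<close> has
  determinant \<open>-1\<close>. As \<open>g\<close> has no fixed point, \<open>A\<close> fixes a nonzero vector, and an element of
  \<open>O(2,1)\<close> with determinant \<open>-1\<close> and eigenvalue \<open>1\<close> is an involution; hence \<open>g\<^sup>2\<close> is a
  nontrivial translation \<open>t\<^sub>w\<close>. In the free group \<open>\<Gamma>\<close> the centralizer of \<open>t\<^sub>w\<close> is cyclic.
  For \<open>h \<in> \<Gamma>\<close> with linear part \<open>B\<close>, the conjugate \<open>h t\<^sub>w h\<^sup>-\<^sup>1 = t\<^sub>B\<^sub>w\<close> lies in that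
  centralizer, so \<open>Bw = \<lambda>w\<close>; properness forbids \<open>|\<lambda>| < 1\<close> for \<open>h\<close> and for \<open>h\<^sup>-\<^sup>1\<close>, so
  \<open>Bw = \<plusminus>w\<close>, and \<open>Bw = -w\<close> is excluded because then \<open>h\<^sup>2\<close> commutes with \<open>t\<^sub>w\<close> while
  \<open>h\<close> inverts its powers. Thus all of \<open>\<Gamma>\<close> centralizes \<open>t\<^sub>w\<close>, and \<open>\<Gamma>\<close> is abelian.
\<close>

section \<open>The Lorentz group O(2,1)\<close>

text \<open>This is \<open>J L\<^sup>T J\<close> with \<open>J = diag(1,1,-1)\<close>, the inverse of \<open>L\<close> when \<open>L \<in> O(2,1)\<close>.\<close>
definition lorentz_adjoint :: "real^3^3 \<Rightarrow> real^3^3" where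
  "lorentz_adjoint L = (\<chi> i j. (if i = 3 then -1 else 1) * (if j = 3 then -1 else 1) * L$j$i)"

lemma O21_columns:
  assumes "L \<in> O21"
  shows "L$1$1*L$1$1 + L$2$1*L$2$1 - L$3$1*L$3$1 = 1"
    "L$1$2*L$1$2 + L$2$2*L$2$2 - L$3$2*L$3$2 = 1"
    "L$1$3*L$1$3 + L$2$3*L$2$3 - L$3$3*L$3$3 = -1"
    "L$1$1*L$1$2 + L$2$1*L$2$2 - L$3$1*L$3$2 = 0"
    "L$1$1*L$1$3 + L$2$1*L$2$3 - L$3$1*L$3$3 = 0"
    "L$1$2*L$1$3 + L$2$2*L$2$3 - L$3$2*L$3$3 = 0"
proof -
  have "lor (L *v axis i 1) (L *v axis j 1) = lor (axis i 1) (axis j 1)" for i j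
    using assms unfolding O21_def by blast
  from this[of 1 1] this[of 2 2] this[of 3 3] this[of 1 2] this[of 1 3] this[of 2 3]
  show "L$1$1*L$1$1 + L$2$1*L$2$1 - L$3$1*L$3$1 = 1"
    "L$1$2*L$1$2 + L$2$2*L$2$2 - L$3$2*L$3$2 = 1"
    "L$1$3*L$1$3 + L$2$3*L$2$3 - L$3$3*L$3$3 = -1"
    "L$1$1*L$1$2 + L$2$1*L$2$2 - L$3$1*L$3$2 = 0"
    "L$1$1*L$1$3 + L$2$1*L$2$3 - L$3$1*L$3$3 = 0"
    "L$1$2*L$1$3 + L$2$2*L$2$3 - L$3$2*L$3$3 = 0"
    by (simp_all add: lor_def matrix_vector_mult_def sum_3 axis_def)
qed

lemma O21_lorentz_adjoint_mult: "L \<in> O21 \<Longrightarrow> lorentz_adjoint L ** L = mat 1"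
  using O21_columns[of L]
  by (simp add: lorentz_adjoint_def matrix_matrix_mult_def sum_3 vec_eq_iff forall_3 mat_def
      algebra_simps)

lemma O21_mult_lorentz_adjoint: "L \<in> O21 \<Longrightarrow> L ** lorentz_adjoint L = mat 1"
  using O21_lorentz_adjoint_mult matrix_left_right_inverse1 by blast

lemma lorentz_adjoint_involutive: "lorentz_adjoint (lorentz_adjoint L) = L"
  by (simp add: lorentz_adjoint_def vec_eq_iff)

lemma lorentz_adjoint_diff: "lorentz_adjoint (L - M) = lorentz_adjoint L - lorentz_adjoint M"
  by (simp add: lorentz_adjoint_def vec_eq_iff algebra_simps)

lemma det_lorentz_adjoint: "det (lorentz_adjoint L) = det L"
  by (simp add: det_3 lorentz_adjoint_def algebra_simps)

lemma det_lorentz_adjoint_add_1: "det (lorentz_adjoint L + mat 1) = det (L + mat 1)"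
  by (simp add: det_3 mat_def lorentz_adjoint_def algebra_simps)

lemma O21_det: "A \<in> O21 \<Longrightarrow> det A = 1 \<or> det A = -1"
  using O21_lorentz_adjoint_mult[of A] det_mul[of "lorentz_adjoint A" A]
  by (simp add: det_lorentz_adjoint) (metis square_eq_1_iff power2_eq_square)

lemma O21_invertible: "A \<in> O21 \<Longrightarrow> A *v v = 0 \<Longrightarrow> v = 0"
  by (metis O21_lorentz_adjoint_mult matrix_vector_mul_assoc matrix_vector_mul_lid
      matrix_vector_mult_0_right)

lemma cayley_hamilton_3:
  fixes L :: "real^3^3"
  shows "L**L**L - (L$1$1+L$2$2+L$3$3) *\<^sub>R (L**L)
    + ((L$2$2*L$3$3 - L$2$3*L$3$2) + (L$1$1*L$3$3 - L$1$3*L$3$1) + (L$1$1*L$2$2 - L$1$2*L$2$1)) *\<^sub>R L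
    - det L *\<^sub>R mat 1 = 0"
  by (simp add: det_3 matrix_matrix_mult_def sum_3 vec_eq_iff forall_3 mat_def algebra_simps)

lemma det_add_1_diff_1:
  fixes L :: "real^3^3"
  shows "det (L + mat 1) + det (L - mat 1) = 2*(L$1$1+L$2$2+L$3$3) + 2 * det L"
    "det (L + mat 1) - det (L - mat 1) = 2 + 2*((L$2$2*L$3$3 - L$2$3*L$3$2)
       + (L$1$1*L$3$3 - L$1$3*L$3$1) + (L$1$1*L$2$2 - L$1$2*L$2$1))"
  by (simp_all add: det_3 mat_def algebra_simps)

text \<open>
  The characteristic polynomial is \<open>(\<lambda> - 1)\<^sup>2(\<lambda> + 1)\<close>: \<open>det (L + 1) = 0\<close> because
  \<open>L + 1 = L (L\<^sup>-\<^sup>1 + 1)\<close> and \<open>L\<^sup>-\<^sup>1 + 1\<close> has the determinant of \<open>L + 1\<close>, \<open>det (L - 1) = 0\<close> by the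
  fixed vector, and these two values determine the trace and the second invariant.
\<close>
lemma O21_det_neg_fixed_vector_char_poly:
  fixes L :: "real^3^3"
  assumes O: "L \<in> O21" and det_L: "det L = -1" and u: "u \<noteq> 0" "L *v u = u"
  shows "L**L**L - L**L - L + mat 1 = 0"
proof -
  have "L ** (lorentz_adjoint L + mat 1) = mat 1 + L"
    by (simp add: matrix_add_ldistrib O21_mult_lorentz_adjoint[OF O])
  hence "det (mat 1 + L) = det L * det (L + mat 1)"
    by (metis det_mul det_lorentz_adjoint_add_1)
  hence plus: "det (L + mat 1) = 0"
    using det_L by (simp add: add.commute[of "mat 1" L])
  have "(L - mat 1) *v u = 0" using u by (simp add: matrix_vector_mult_diff_rdistrib)
  hence "\<not> invertible (L - mat 1)"
    using u inj_matrix_vector_mult unfolding vec.inj_iff_eq_0 by blast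
  hence minus: "det (L - mat 1) = 0" using invertible_det_nz by blast
  have "L$1$1+L$2$2+L$3$3 = 1" using det_add_1_diff_1(1)[of L] plus minus det_L by simp
  moreover have "(L$2$2*L$3$3 - L$2$3*L$3$2) + (L$1$1*L$3$3 - L$1$3*L$3$1)
      + (L$1$1*L$2$2 - L$1$2*L$2$1) = -1"
    using det_add_1_diff_1(2)[of L] plus minus by simp
  ultimately show ?thesis using cayley_hamilton_3[of L] det_L by simp
qed

lemma lorentz_skew_square_eq_0:
  fixes K :: "real^3^3"
  assumes skew: "lorentz_adjoint K = - K" and sq: "K ** K = 0"
  shows "K = 0"
proof -
  have entry: "lorentz_adjoint K $ i $ j = - K $ i $ j" for i j using skew by simp
  have diag: "K$1$1 = 0" "K$2$2 = 0" "K$3$3 = 0"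
    using entry[of 1 1] entry[of 2 2] entry[of 3 3] by (simp_all add: lorentz_adjoint_def)
  have off: "K$2$1 = - K$1$2" "K$3$1 = K$1$3" "K$3$2 = K$2$3"
    using entry[of 2 1] entry[of 3 1] entry[of 3 2] by (simp_all add: lorentz_adjoint_def)
  have "(K**K)$3$3 = 0" "(K**K)$1$1 = 0" using sq by simp_all
  hence "K$1$3*K$1$3 + K$2$3*K$2$3 = 0" "- K$1$2*K$1$2 + K$1$3*K$1$3 = 0"
    using diag off by (simp_all add: matrix_matrix_mult_def sum_3)
  hence "K$1$3 = 0" "K$2$3 = 0" "K$1$2 = 0" by (auto simp: add_nonneg_eq_0_iff)
  thus ?thesis using diag off by (simp add: vec_eq_iff forall_3)
qed

lemma O21_det_neg_fixed_vector_involution: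
  fixes L :: "real^3^3"
  assumes O: "L \<in> O21" and "det L = -1" and "u \<noteq> 0" "L *v u = u"
  shows "L ** L = mat 1"
proof -
  let ?X = "lorentz_adjoint L" and ?C = "L**L**L - L**L - L + mat 1"
  have C: "?C = 0" by (rule O21_det_neg_fixed_vector_char_poly[OF assms])
  have "L ** (mat 1 + L - L**L) = mat 1 - ?C"
    by (simp add: matrix_matrix_mult_def sum_3 vec_eq_iff forall_3 mat_def algebra_simps)
  hence "?X ** (L ** (mat 1 + L - L**L)) = ?X" using C by simp
  hence X: "?X = mat 1 + L - L**L"
    by (simp add: matrix_mul_assoc O21_lorentz_adjoint_mult[OF O])
  \<comment> \<open>\<open>K = L - L\<^sup>-\<^sup>1\<close> is Lorentz-skew, and \<open>K\<^sup>2 = (L + 1) C = 0\<close>.\<close>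
  define K where "K = L - ?X"
  have "lorentz_adjoint K = - K"
    by (simp add: K_def lorentz_adjoint_diff lorentz_adjoint_involutive)
  moreover have "K ** K = (L + mat 1) ** ?C"
    unfolding K_def X
    by (simp add: matrix_matrix_mult_def sum_3 vec_eq_iff forall_3 mat_def algebra_simps)
  ultimately have "K = 0" using C lorentz_skew_square_eq_0 by simp
  thus ?thesis using X unfolding K_def by (simp add: algebra_simps)
qed

lemma bij_comp_inv_eq_id: "bij f \<Longrightarrow> f \<circ> inv f = id"
  using bij_is_surj surj_iff by blast

lemma commute_inv:
  assumes "bij f" "f \<circ> g = g \<circ> f"
  shows "inv f \<circ> g = g \<circ> inv f"
proof -
  have "inv f \<circ> g = inv f \<circ> (g \<circ> f) \<circ> inv f"
    using assms(1) by (simp add: comp_assoc bij_comp_inv_eq_id)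
  also have "\<dots> = (inv f \<circ> f) \<circ> g \<circ> inv f"
    using assms(2) by (simp add: comp_assoc)
  also have "\<dots> = g \<circ> inv f"
    using assms(1) by (simp add: bij_is_inj)
  finally show ?thesis .
qed

lemma commute_funpow: "f \<circ> g = g \<circ> f \<Longrightarrow> f \<circ> g ^^ n = g ^^ n \<circ> f"
proof (induction n)
  case (Suc n)
  have "f \<circ> g ^^ Suc n = (f \<circ> g) \<circ> g ^^ n" by (simp add: comp_assoc)
  also have "\<dots> = g \<circ> (f \<circ> g ^^ n)" by (simp only: Suc.prems comp_assoc)
  also have "\<dots> = g ^^ Suc n \<circ> f" by (simp only: Suc.IH[OF Suc.prems] funpow.simps comp_assoc)
  finally show ?case .
qed simp

lemma conj_funpow:
  assumes "bij p"
  shows "p \<circ> f ^^ n \<circ> inv p = (p \<circ> f \<circ> inv p) ^^ n"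
proof (induction n)
  case 0
  thus ?case using assms by (simp add: bij_comp_inv_eq_id)
next
  case (Suc n)
  have "p \<circ> f ^^ Suc n \<circ> inv p = (p \<circ> f \<circ> inv p) \<circ> (p \<circ> f ^^ n \<circ> inv p)"
    using assms by (simp add: fun_eq_iff bij_is_inj inv_f_f)
  thus ?case by (simp only: Suc.IH funpow.simps)
qed

lemma int_powers_commute:
  assumes "bij c" and "x = c ^^ a \<or> x = inv c ^^ a" and "y = c ^^ b \<or> y = inv c ^^ b"
  shows "x \<circ> y = y \<circ> x"
proof -
  have "c ^^ a \<circ> c ^^ b = c ^^ b \<circ> c ^^ a" for c :: "'a \<Rightarrow> 'a" and a b
    by (simp flip: funpow_add add: add.commute)
  moreover have "c ^^ a \<circ> inv c ^^ b = inv c ^^ b \<circ> c ^^ a" for a b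
    using commute_inv[of "c ^^ b" "c ^^ a"] \<open>bij c\<close>
    by (simp add: inv_fn bij_fn flip: funpow_add add: add.commute)
  ultimately show ?thesis using assms(2,3) by metis
qed

lemma int_powers_relation:
  assumes "bij c" and "t = c ^^ m \<or> t = inv c ^^ m" and "s = c ^^ n \<or> s = inv c ^^ n"
  shows "t ^^ n = s ^^ m \<or> t ^^ n = inv (s ^^ m)"
proof -
  have inv_pow: "inv c ^^ k = inv (c ^^ k)" and inv_inv_pow: "inv (inv (c ^^ k)) = c ^^ k" for k
    using \<open>bij c\<close> by (simp_all add: inv_fn[symmetric] bij_fn inv_inv_eq del: inv_fn)
  from assms(2,3) show ?thesis
    by (elim disjE) (simp_all only: funpow_mult; simp add: inv_pow inv_inv_pow mult.commute)+
qed

lemma commute_conj: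
  assumes "bij p" and "x \<circ> (p \<circ> r \<circ> inv p) = (p \<circ> r \<circ> inv p) \<circ> x"
  shows "(inv p \<circ> x \<circ> p) \<circ> r = r \<circ> (inv p \<circ> x \<circ> p)"
proof -
  have "(inv p \<circ> x \<circ> p) \<circ> r = inv p \<circ> (x \<circ> (p \<circ> r \<circ> inv p)) \<circ> p"
    using assms(1) by (simp add: comp_assoc bij_is_inj)
  also have "\<dots> = inv p \<circ> ((p \<circ> r \<circ> inv p) \<circ> x) \<circ> p"
    by (simp only: assms(2))
  also have "\<dots> = r \<circ> (inv p \<circ> x \<circ> p)"
    using assms(1) by (simp flip: comp_assoc add: bij_is_inj)
  finally show ?thesis .
qed

definition aff :: "real^3^3 \<Rightarrow> pt \<Rightarrow> pt \<Rightarrow> pt" where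
  "aff A b = (\<lambda>x. A *v x + b)"

definition transl :: "pt \<Rightarrow> pt \<Rightarrow> pt" where
  "transl v = (\<lambda>x. x + v)"

lemma lorentz_isometry_aff: "lorentz_isometry f \<Longrightarrow> \<exists>A b. A \<in> O21 \<and> f = aff A b"
  unfolding lorentz_isometry_def aff_def by blast

lemma aff_comp: "aff A b \<circ> aff B c = aff (A ** B) (A *v c + b)"
  by (simp add: aff_def fun_eq_iff matrix_vector_mul_assoc matrix_vector_right_distrib algebra_simps)

lemma aff_eq_iff: "aff A b = aff B c \<longleftrightarrow> A = B \<and> b = c"
proof
  assume eq: "aff A b = aff B c"
  hence b: "b = c" by (metis aff_def add_0 matrix_vector_mult_0_right)
  have "A *v x = B *v x" for x using fun_cong[OF eq, of x] b by (simp add: aff_def)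
  thus "A = B \<and> b = c" using b by (simp add: matrix_eq)
qed simp

lemma id_eq_aff: "id = aff (mat 1) 0"
  by (simp add: aff_def fun_eq_iff)

lemma aff_eq_id_iff: "aff A b = id \<longleftrightarrow> A = mat 1 \<and> b = 0"
  by (simp add: id_eq_aff aff_eq_iff)

lemma bij_aff: "A \<in> O21 \<Longrightarrow> bij (aff A b)"
  by (rule bij_betw_byWitness[of _ "\<lambda>y. lorentz_adjoint A *v (y - b)"])
    (simp_all add: aff_def matrix_vector_mul_assoc O21_lorentz_adjoint_mult
      O21_mult_lorentz_adjoint)

lemma matrix_vector_mult_neg: "(A::real^'n^'m) *v (- x) = - (A *v x)"
  by (simp add: matrix_vector_mult_def vec_eq_iff sum_negf[symmetric])

lemma aff_comp_transl: "aff A b \<circ> transl v = transl (A *v v) \<circ> aff A b"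
  by (simp add: aff_def transl_def fun_eq_iff matrix_vector_right_distrib algebra_simps)

lemma aff_conj_transl: "A \<in> O21 \<Longrightarrow> aff A b \<circ> transl v \<circ> inv (aff A b) = transl (A *v v)"
  by (simp add: aff_comp_transl comp_assoc bij_aff bij_comp_inv_eq_id)

lemma transl_comp: "transl v \<circ> transl v' = transl (v + v')"
  by (simp add: transl_def fun_eq_iff algebra_simps)

lemma transl_0: "transl 0 = id"
  by (simp add: transl_def fun_eq_iff)

lemma transl_eq_iff: "transl v = transl v' \<longleftrightarrow> v = v'"
  by (metis transl_def add_0)

lemma transl_eq_id_iff: "transl v = id \<longleftrightarrow> v = 0"
  by (metis transl_0 transl_eq_iff)

lemma funpow_transl: "transl v ^^ n = transl (real n *\<^sub>R v)"
  by (induction n) (auto simp: transl_0 transl_comp algebra_simps)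

lemma inv_transl: "inv (transl v) = transl (- v)"
  by (rule inv_unique_comp) (simp_all add: transl_comp transl_0)

lemma aff_comp_transl_flip:
  assumes "A *v w = - w" and "aff A b \<circ> transl (t *\<^sub>R w) = transl (t *\<^sub>R w) \<circ> aff A b"
  shows "t *\<^sub>R w = 0"
proof -
  have "t *\<^sub>R (A *v w) + b = b + t *\<^sub>R w"
    using fun_cong[OF assms(2), of 0] by (simp add: aff_def transl_def matrix_vector_mult_scaleR)
  hence "- (t *\<^sub>R w) = t *\<^sub>R w" using assms(1) by (simp add: add.commute)
  thus ?thesis by (simp add: vec_eq_iff)
qed

lemma aff_square_comp_transl_flip:
  "A *v w = - w \<Longrightarrow> (aff A b \<circ> aff A b) \<circ> transl w = transl w \<circ> (aff A b \<circ> aff A b)"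
  by (simp add: aff_comp aff_comp_transl matrix_vector_mul_assoc[symmetric] matrix_vector_mult_neg)

lemma aff_square_transl: "A ** A = mat 1 \<Longrightarrow> aff A b \<circ> aff A b = transl (A *v b + b)"
  unfolding aff_comp by (simp add: aff_def transl_def)

text \<open>The midpoint of \<open>0\<close> and its image is fixed by an affine involution.\<close>
lemma aff_involution_fixed_point:
  assumes "aff A b \<circ> aff A b = id"
  shows "aff A b ((1/2) *\<^sub>R b) = (1/2) *\<^sub>R b"
proof -
  have "A *v (A *v 0 + b) + b = 0" using fun_cong[OF assms, of 0] by (simp add: aff_def)
  hence "A *v b = - b" by (simp add: eq_neg_iff_add_eq_0)
  thus ?thesis by (simp add: aff_def matrix_vector_mult_scaleR)
qed

lemma aff_fixed_point_exists:
  assumes "\<And>u. A *v u = u \<Longrightarrow> u = 0"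
  shows "\<exists>x. aff A b x = x"
proof -
  have "inj ((*v) (A - mat 1))"
    using assms unfolding vec.inj_iff_eq_0 by (auto simp: matrix_vector_mult_diff_rdistrib)
  then obtain M where "M ** (A - mat 1) = mat 1"
    using matrix_left_invertible_injective by blast
  hence "(A - mat 1) ** M = mat 1" by (rule matrix_left_right_inverse1)
  hence "(A - mat 1) *v (M *v (- b)) = - b" by (simp add: matrix_vector_mul_assoc)
  hence "aff A b (M *v (- b)) = M *v (- b)"
    by (simp add: aff_def matrix_vector_mult_diff_rdistrib algebra_simps)
  thus ?thesis by blast
qed

section \<open>Reduced words\<close>

definition letter_inv :: "bool \<times> 'a \<Rightarrow> bool \<times> 'a" where
  "letter_inv l = (\<not> fst l, snd l)"

lemma letter_inv_letter_inv [simp]: "letter_inv (letter_inv a) = a"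
  by (simp add: letter_inv_def)

lemma letter_inv_neq [simp]: "letter_inv a \<noteq> a" "a \<noteq> letter_inv a"
  by (cases a, simp add: letter_inv_def)+

lemma snd_letter_inv [simp]: "snd (letter_inv a) = snd a"
  by (simp add: letter_inv_def)

definition word_inv :: "(bool \<times> 'a) list \<Rightarrow> (bool \<times> 'a) list" where
  "word_inv w = rev (map letter_inv w)"

lemma word_inv_Nil [simp]: "word_inv [] = []"
  by (simp add: word_inv_def)

lemma word_inv_Cons: "word_inv (a # w) = word_inv w @ [letter_inv a]"
  by (simp add: word_inv_def)

lemma snd_set_word_inv: "snd ` set (word_inv w) = snd ` set w"
  by (simp add: word_inv_def image_image)

lemma last_word_inv: "w \<noteq> [] \<Longrightarrow> last (word_inv w) = letter_inv (hd w)"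
  by (cases w) (auto simp: word_inv_def)

fun cancel_Cons :: "bool \<times> 'a \<Rightarrow> (bool \<times> 'a) list \<Rightarrow> (bool \<times> 'a) list" where
  "cancel_Cons a [] = [a]"
| "cancel_Cons a (b # w) = (if b = letter_inv a then w else a # b # w)"

definition reduce :: "(bool \<times> 'a) list \<Rightarrow> (bool \<times> 'a) list" where
  "reduce w = foldr cancel_Cons w []"

lemma reduced_word_iff_successively:
  "reduced_word w \<longleftrightarrow> successively (\<lambda>a b. b \<noteq> letter_inv a) w"
  by (induction w rule: reduced_word.induct) (auto simp: letter_inv_def)

lemma reduced_word_Cons_iff:
  "reduced_word (a # w) \<longleftrightarrow> reduced_word w \<and> (w = [] \<or> hd w \<noteq> letter_inv a)"
  by (auto simp: reduced_word_iff_successively successively_Cons)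

lemma reduced_word_append_iff:
  "reduced_word (xs @ ys) \<longleftrightarrow> reduced_word xs \<and> reduced_word ys \<and>
     (xs = [] \<or> ys = [] \<or> hd ys \<noteq> letter_inv (last xs))"
  by (simp add: reduced_word_iff_successively successively_append_iff)

lemma reduced_word_word_inv: "reduced_word (word_inv w) \<longleftrightarrow> reduced_word w"
  unfolding reduced_word_iff_successively word_inv_def successively_rev successively_map
  by (rule successively_cong) (auto simp: letter_inv_def)

lemma reduced_word_cancel_Cons: "reduced_word w \<Longrightarrow> reduced_word (cancel_Cons a w)"
  by (cases w) (auto simp: reduced_word_Cons_iff)

lemma cancel_Cons_letter_inv:
  assumes "reduced_word w"
  shows "cancel_Cons (letter_inv a) (cancel_Cons a w) = w"
proof (cases w)
  case (Cons b w')
  show ?thesis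
  proof (cases "b = letter_inv a")
    case True
    thus ?thesis using Cons assms by (cases w') (auto simp: reduced_word_Cons_iff)
  qed (use Cons in simp)
qed simp

lemma reduce_Nil [simp]: "reduce [] = []"
  by (simp add: reduce_def)

lemma reduce_Cons [simp]: "reduce (a # w) = cancel_Cons a (reduce w)"
  by (simp add: reduce_def)

lemma reduce_append: "reduce (u @ v) = foldr cancel_Cons u (reduce v)"
  by (induction u) auto

lemma reduced_word_reduce: "reduced_word (reduce w)"
  by (induction w) (auto intro: reduced_word_cancel_Cons)

lemma reduce_reduced_word: "reduced_word w \<Longrightarrow> reduce w = w"
proof (induction w)
  case (Cons a w)
  hence "reduce w = w" by (simp add: reduced_word_Cons_iff)
  thus ?case using Cons.prems by (cases w) (auto simp: reduced_word_Cons_iff)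
qed simp

lemma snd_set_reduce: "snd ` set (reduce w) \<subseteq> snd ` set w"
proof (induction w)
  case (Cons a w)
  have "snd ` set (cancel_Cons a w') \<subseteq> insert (snd a) (snd ` set w')" for w'
    by (cases w') auto
  from this[of "reduce w"] show ?case using Cons by auto
qed simp

lemma length_reduce: "reduce w = w \<or> length (reduce w) + 2 \<le> length w"
proof (induction w)
  case (Cons a w)
  have "cancel_Cons a v = a # v \<or> (\<exists>v'. v = letter_inv a # v' \<and> cancel_Cons a v = v')" for v
    by (cases v) auto
  then consider "cancel_Cons a (reduce w) = a # reduce w"
    | w' where "reduce w = letter_inv a # w'" "cancel_Cons a (reduce w) = w'"
    by blast
  thus ?case
  proof cases
    case 2
    thus ?thesis using Cons.IH by (cases "reduce w = w") auto
  qed (use Cons.IH in auto)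
qed simp

lemma length_reduce_less: "\<not> reduced_word w \<Longrightarrow> length (reduce w) < length w"
  using length_reduce[of w] reduced_word_reduce[of w] by force

lemma foldr_cancel_Cons_word_inv:
  "reduced_word x \<Longrightarrow> foldr cancel_Cons v (foldr cancel_Cons (word_inv v) x) = x"
proof (induction v arbitrary: x)
  case (Cons a v)
  have "reduced_word (cancel_Cons (letter_inv a) x)"
    using Cons.prems by (rule reduced_word_cancel_Cons)
  thus ?case
    using Cons.IH cancel_Cons_letter_inv[OF Cons.prems, of "letter_inv a"] by (simp add: word_inv_Cons)
qed simp

definition cyclically_reduced :: "(bool \<times> 'a) list \<Rightarrow> bool" where
  "cyclically_reduced r \<longleftrightarrow> r \<noteq> [] \<and> reduced_word r \<and> last r \<noteq> letter_inv (hd r)"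

lemma cyclic_decomposition:
  "reduced_word u \<Longrightarrow> u \<noteq> [] \<Longrightarrow> \<exists>p r. u = p @ r @ word_inv p \<and> cyclically_reduced r"
proof (induction "length u" arbitrary: u rule: less_induct)
  case less
  show ?case
  proof (cases "last u = letter_inv (hd u)")
    case False
    thus ?thesis using less.prems by (intro exI[of _ "[]"] exI[of _ u]) (simp add: cyclically_reduced_def)
  next
    case True
    obtain a m where u: "u = a # m" using less.prems by (cases u) auto
    have "m \<noteq> []" using True u by auto
    then obtain m' b where m: "m = m' @ [b]" by (metis append_butlast_last_id)
    have b: "b = letter_inv a" using True u m by simp
    have "m' \<noteq> []" using less.prems(1) u m b by (auto simp: reduced_word_Cons_iff)
    moreover have "reduced_word m'"
      using less.prems(1) u m by (simp add: reduced_word_Cons_iff reduced_word_append_iff)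
    moreover have "length m' < length u" using u m by simp
    ultimately obtain p r where "m' = p @ r @ word_inv p" "cyclically_reduced r"
      using less.hyps by blast
    moreover have "u = (a # p) @ r @ word_inv (a # p)"
      using u m b \<open>m' = p @ r @ word_inv p\<close> by (simp add: word_inv_Cons)
    ultimately show ?thesis by blast
  qed
qed

definition word_pow :: "'a list \<Rightarrow> nat \<Rightarrow> 'a list" where
  "word_pow w n = concat (replicate n w)"

lemma word_pow_0 [simp]: "word_pow w 0 = []"
  by (simp add: word_pow_def)

lemma word_pow_Suc: "word_pow w (Suc n) = w @ word_pow w n"
  by (simp add: word_pow_def)

lemma length_word_pow: "length (word_pow w n) = n * length w"
  by (induction n) (auto simp: word_pow_Suc)

lemma word_pow_add: "word_pow w (m + n) = word_pow w m @ word_pow w n"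
  by (simp add: word_pow_def replicate_add)

lemma word_pow_mult: "word_pow (word_pow w i) j = word_pow w (i * j)"
  by (induction j) (auto simp: word_pow_Suc word_pow_add[symmetric] add.commute)

lemma word_pow_commute: "w @ word_pow w n = word_pow w n @ w"
  by (induction n) (auto simp: word_pow_Suc)

text \<open>Both \<open>x y\<close> and \<open>y x\<close> are the prefix of length \<open>|x| + |y|\<close> of the common power \<open>x\<^sup>2\<^sup>a = y\<^sup>2\<^sup>b\<close>.\<close>
lemma word_pow_eq_imp_commute:
  assumes e: "word_pow x a = word_pow y b" and a: "a \<ge> 1" and b: "b \<ge> 1"
  shows "x @ y = y @ x"
proof -
  define T where "T = word_pow x (2*a)"
  have T2: "T = word_pow y (2*b)" unfolding T_def using e by (simp add: mult_2 word_pow_add)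
  have xT: "x @ T = T @ x" unfolding T_def by (rule word_pow_commute)
  have yT: "y @ T = T @ y" unfolding T2 by (rule word_pow_commute)
  have lx: "length x \<le> length (word_pow x a)" using a length_word_pow[of x a] by simp
  have ly: "length y \<le> length (word_pow x a)" using b length_word_pow[of y b] e by simp
  have lT: "length T = 2 * length (word_pow x a)" unfolding T_def by (simp add: length_word_pow)
  obtain m where "2*b = Suc m" using b by (cases "2*b") auto
  hence Ty: "T = y @ word_pow y m" using T2 by (simp add: word_pow_Suc)
  obtain k where "2*a = Suc k" using a by (cases "2*a") auto
  hence Tx: "T = x @ word_pow x k" using T_def by (simp add: word_pow_Suc)
  have "x @ y = take (length x + length y) (x @ T)" using Ty by simp
  also have "\<dots> = take (length x + length y) T" using xT lT lx ly by simp
  also have "\<dots> = take (length y + length x) (y @ T)" using yT lT lx ly by (simp add: add.commute)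
  also have "\<dots> = y @ x" using Tx by simp
  finally show ?thesis .
qed

lemma commute_via_common_word:
  assumes "x @ r = r @ x" "y @ r = r @ y" "r \<noteq> []"
  shows "x @ y = y @ x"
proof (cases "x = [] \<or> y = []")
  case False
  obtain m1 n1 w1 where w1: "word_pow w1 m1 = x" "word_pow w1 n1 = r"
    using comm_append_are_replicate[OF assms(1)] unfolding word_pow_def by blast
  obtain m2 n2 w2 where w2: "word_pow w2 m2 = y" "word_pow w2 n2 = r"
    using comm_append_are_replicate[OF assms(2)] unfolding word_pow_def by blast
  have nz: "m1 \<ge> 1" "n1 \<ge> 1" "m2 \<ge> 1" "n2 \<ge> 1" using w1 w2 False assms(3)
    by (auto simp: Suc_le_eq intro!: Nat.gr0I)
  have "word_pow x (n1 * m2) = word_pow w1 (m1 * (n1 * m2))"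
    using word_pow_mult[of w1 m1 "n1*m2"] w1(1) by simp
  also have "\<dots> = word_pow r (m1 * m2)"
    using word_pow_mult[of w1 n1 "m1*m2"] w1(2) by (simp add: mult_ac)
  also have "\<dots> = word_pow w2 (n2 * (m1 * m2))"
    using word_pow_mult[of w2 n2 "m1*m2"] w2(2) by simp
  also have "\<dots> = word_pow y (n2 * m1)"
    using word_pow_mult[of w2 m2 "n2*m1"] w2(1) by (simp add: mult_ac)
  finally show ?thesis by (rule word_pow_eq_imp_commute) (use nz in simp_all)
qed auto

definition shortest_commuting :: "'a list \<Rightarrow> 'a list \<Rightarrow> bool" where
  "shortest_commuting r \<rho> \<longleftrightarrow> \<rho> \<noteq> [] \<and> \<rho> @ r = r @ \<rho> \<and>
     (\<forall>z. z \<noteq> [] \<and> z @ r = r @ z \<longrightarrow> length \<rho> \<le> length z)"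

lemma shortest_commuting_exists:
  assumes "r \<noteq> []"
  shows "\<exists>\<rho>. shortest_commuting r \<rho> \<and> set \<rho> \<subseteq> set r"
proof -
  let ?P = "\<lambda>n. \<exists>z. z \<noteq> [] \<and> z @ r = r @ z \<and> length z = n"
  have "?P (length r)" using assms by blast
  hence "?P (LEAST n. ?P n)" by (rule LeastI)
  then obtain \<rho> where \<rho>: "\<rho> \<noteq> []" "\<rho> @ r = r @ \<rho>" "length \<rho> = (LEAST n. ?P n)" by blast
  have shortest: "shortest_commuting r \<rho>"
    using \<rho> by (auto simp: shortest_commuting_def intro: Least_le)
  hence "length \<rho> \<le> length r" using assms by (simp add: shortest_commuting_def)
  hence "take (length \<rho>) (r @ \<rho>) = take (length \<rho>) r" by simp
  hence "\<rho> = take (length \<rho>) r" using \<rho>(2) by (metis append_eq_conv_conj)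
  hence "set \<rho> \<subseteq> set r" by (metis set_take_subset)
  thus ?thesis using shortest by blast
qed

text \<open>\<open>x\<close> commutes with \<open>\<rho>\<close>, so by minimality \<open>\<rho>\<close> is a prefix of \<open>x\<close>; strip it and induct.\<close>
lemma shortest_commuting_root:
  assumes "shortest_commuting r \<rho>" and "r \<noteq> []" and "x @ r = r @ x"
  shows "\<exists>n. x = word_pow \<rho> n"
  using assms(3)
proof (induction "length x" arbitrary: x rule: less_induct)
  case less
  note \<rho> = assms(1)[unfolded shortest_commuting_def]
  show ?case
  proof (cases "x = []")
    case True
    thus ?thesis by (intro exI[of _ 0]) simp
  next
    case False
    have "length \<rho> \<le> length x" using \<rho> False less.prems by blast
    hence "take (length \<rho>) (x @ \<rho>) = take (length \<rho>) x" by simp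
    moreover have "x @ \<rho> = \<rho> @ x" using commute_via_common_word[OF less.prems _ assms(2)] \<rho> by blast
    ultimately have "take (length \<rho>) x = \<rho>" by simp
    then obtain x' where x: "x = \<rho> @ x'" by (metis append_take_drop_id)
    hence "\<rho> @ (x' @ r) = \<rho> @ (r @ x')" using less.prems \<rho> by (metis append_assoc)
    hence "x' @ r = r @ x'" by simp
    moreover have "length x' < length x" using x \<rho> by simp
    ultimately obtain n where "x' = word_pow \<rho> n" using less.hyps by blast
    thus ?thesis using x by (intro exI[of _ "Suc n"]) (simp add: word_pow_Suc)
  qed
qed

section \<open>Free groups of bijections\<close>

definition letter_eval :: "bool \<times> (pt \<Rightarrow> pt) \<Rightarrow> pt \<Rightarrow> pt" where
  "letter_eval a = (if fst a then snd a else inv (snd a))"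

lemma word_eval_Cons_letter: "word_eval (a # w) = letter_eval a \<circ> word_eval w"
  by (cases a) (simp add: letter_eval_def)

lemma word_eval_append: "word_eval (u @ v) = word_eval u \<circ> word_eval v"
  by (induction u) (auto simp: word_eval_Cons_letter)

lemma word_eval_word_pow: "word_eval (word_pow w n) = word_eval w ^^ n"
  by (induction n) (auto simp: word_pow_Suc word_eval_append)

lemma bij_letter_eval: "bij (snd a) \<Longrightarrow> bij (letter_eval a)"
  by (simp add: letter_eval_def bij_imp_bij_inv)

lemma letter_eval_letter_inv:
  "bij (snd a) \<Longrightarrow> letter_eval a \<circ> letter_eval (letter_inv a) = id"
  "bij (snd a) \<Longrightarrow> letter_eval (letter_inv a) \<circ> letter_eval a = id"
  by (auto simp: letter_eval_def letter_inv_def bij_comp_inv_eq_id bij_is_inj)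

lemma word_eval_cancel_Cons:
  assumes "bij (snd a)"
  shows "word_eval (cancel_Cons a w) = letter_eval a \<circ> word_eval w"
proof (cases w)
  case (Cons b w')
  show ?thesis
  proof (cases "b = letter_inv a")
    case True
    have "letter_eval a \<circ> word_eval w
        = (letter_eval a \<circ> letter_eval (letter_inv a)) \<circ> word_eval w'"
      using Cons True by (simp add: word_eval_Cons_letter comp_assoc)
    thus ?thesis using Cons True letter_eval_letter_inv[OF assms] by simp
  qed (simp add: Cons word_eval_Cons_letter)
qed (simp add: word_eval_Cons_letter)

context
  fixes S :: "(pt \<Rightarrow> pt) set"
  assumes bij_S: "\<forall>s\<in>S. bij s"
begin

lemma word_eval_reduce: "snd ` set w \<subseteq> S \<Longrightarrow> word_eval (reduce w) = word_eval w"
  using bij_S by (induction w) (auto simp: word_eval_cancel_Cons word_eval_Cons_letter)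

lemma bij_word_eval: "snd ` set w \<subseteq> S \<Longrightarrow> bij (word_eval w)"
  using bij_S by (induction w) (auto simp: word_eval_Cons_letter bij_letter_eval intro: bij_comp)

lemma word_eval_word_inv: "snd ` set w \<subseteq> S \<Longrightarrow> word_eval (word_inv w) = inv (word_eval w)"
proof (induction w)
  case (Cons a w)
  hence bij_a: "bij (snd a)" and w: "snd ` set w \<subseteq> S" using bij_S by auto
  have "word_eval (word_inv (a # w)) = inv (word_eval w) \<circ> letter_eval (letter_inv a)"
    using Cons.IH[OF w] by (simp add: word_inv_Cons word_eval_append word_eval_Cons_letter)
  also have "\<dots> = inv (letter_eval a \<circ> word_eval w)"
    using bij_a bij_word_eval[OF w] letter_eval_letter_inv[OF bij_a]
    by (simp add: o_inv_distrib bij_letter_eval inv_unique_comp)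
  finally show ?case by (simp only: word_eval_Cons_letter)
qed simp

end

locale free_bij_group =
  fixes S G :: "(pt \<Rightarrow> pt) set"
  assumes free: "free_on S G" and bij_S: "\<forall>s\<in>S. bij s"
begin

lemma word_eval_mem: "snd ` set u \<subseteq> S \<Longrightarrow> word_eval u \<in> G"
  using free unfolding free_on_def by auto

lemma reduced_word_eval_id_imp_Nil:
  "reduced_word u \<Longrightarrow> snd ` set u \<subseteq> S \<Longrightarrow> word_eval u = id \<Longrightarrow> u = []"
  using free unfolding free_on_def set_map by blast

lemma reduced_word_exists:
  assumes "x \<in> G"
  obtains u where "reduced_word u" "snd ` set u \<subseteq> S" "word_eval u = x"
proof -
  obtain w where w: "snd ` set w \<subseteq> S" "x = word_eval w"
    using free assms unfolding free_on_def by auto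
  show ?thesis
    using that[OF reduced_word_reduce] snd_set_reduce[of w] w word_eval_reduce[OF bij_S]
    by blast
qed

lemma comp_mem:
  assumes "x \<in> G" "y \<in> G"
  shows "x \<circ> y \<in> G"
proof -
  obtain u v where "snd ` set u \<subseteq> S" "word_eval u = x" "snd ` set v \<subseteq> S" "word_eval v = y"
    using reduced_word_exists[OF assms(1)] reduced_word_exists[OF assms(2)] by metis
  thus ?thesis using word_eval_mem[of "u @ v"] by (auto simp: word_eval_append)
qed

lemma inv_mem:
  assumes "x \<in> G"
  shows "inv x \<in> G"
proof -
  obtain u where "snd ` set u \<subseteq> S" "word_eval u = x" using reduced_word_exists[OF assms] by blast
  thus ?thesis
    using word_eval_mem[of "word_inv u"] word_eval_word_inv[OF bij_S] by (simp add: snd_set_word_inv)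
qed

lemma reduced_word_unique:
  assumes u: "reduced_word u" "snd ` set u \<subseteq> S" and v: "reduced_word v" "snd ` set v \<subseteq> S"
    and eq: "word_eval u = word_eval v"
  shows "u = v"
proof -
  let ?y = "reduce (word_inv v @ u)"
  have letters: "snd ` set (word_inv v @ u) \<subseteq> S"
    using u v by (simp add: image_Un snd_set_word_inv)
  have "word_eval ?y = inv (word_eval v) \<circ> word_eval u"
    using letters u v by (simp add: word_eval_reduce[OF bij_S] word_eval_append word_eval_word_inv[OF bij_S])
  also have "\<dots> = id" using eq bij_word_eval[OF bij_S v(2)] by (simp add: bij_is_inj)
  finally have "word_eval ?y = id" .
  moreover have "snd ` set ?y \<subseteq> S" using snd_set_reduce[of "word_inv v @ u"] letters by blast
  ultimately have "?y = []" using reduced_word_eval_id_imp_Nil reduced_word_reduce by blast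
  moreover have "?y = foldr cancel_Cons (word_inv v) u"
    using reduce_append[of "word_inv v" u] reduce_reduced_word[OF u(1)] by simp
  ultimately have "foldr cancel_Cons v (foldr cancel_Cons (word_inv v) u) = foldr cancel_Cons v []"
    by simp
  thus ?thesis
    using foldr_cancel_Cons_word_inv[OF u(1), of v] reduce_reduced_word[OF v(1)] by (simp add: reduce_def)
qed

lemma reduced_word_if_same_value_length:
  assumes u: "reduced_word u" "snd ` set u \<subseteq> S" and v: "snd ` set v \<subseteq> S"
    and "word_eval u = word_eval v" and "length u = length v"
  shows "reduced_word v"
proof (rule ccontr)
  assume "\<not> reduced_word v"
  have "snd ` set (reduce v) \<subseteq> S" using snd_set_reduce[of v] v by (rule order_trans)
  moreover have "word_eval (reduce v) = word_eval u"
    using assms(4) word_eval_reduce[OF bij_S v] by simp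
  ultimately have "reduce v = u" using reduced_word_unique[OF reduced_word_reduce _ u] by blast
  thus False using length_reduce_less[OF \<open>\<not> reduced_word v\<close>] assms(5) by simp
qed

text \<open>
  If \<open>x\<close> commutes with the cyclically reduced \<open>r\<close>, then \<open>x r\<close> and \<open>r x\<close> are equal words,
  either for \<open>x\<close> or for \<open>x\<^sup>-\<^sup>1\<close>: at most one of them can cancel against \<open>r\<close>, and if \<open>x r\<close> is
  reduced then so is \<open>r x\<close>, having the same value and length.
\<close>
lemma commute_with_cyclically_reduced:
  assumes r: "cyclically_reduced r" "snd ` set r \<subseteq> S"
    and x: "reduced_word x" "snd ` set x \<subseteq> S"
    and comm: "word_eval x \<circ> word_eval r = word_eval r \<circ> word_eval x"
  shows "x @ r = r @ x \<or> word_inv x @ r = r @ word_inv x"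
proof -
  have reduced_commute: "y @ r = r @ y"
    if y: "reduced_word y" "snd ` set y \<subseteq> S"
      "word_eval y \<circ> word_eval r = word_eval r \<circ> word_eval y"
      and yr: "reduced_word (y @ r)" for y
  proof -
    have letters: "snd ` set (y @ r) \<subseteq> S" "snd ` set (r @ y) \<subseteq> S" using y(2) r(2) by auto
    have eq: "word_eval (y @ r) = word_eval (r @ y)" using y(3) by (simp add: word_eval_append)
    have "reduced_word (r @ y)"
      by (rule reduced_word_if_same_value_length[OF yr letters eq]) simp
    thus ?thesis using reduced_word_unique[OF yr letters(1) _ letters(2) eq] by blast
  qed
  have r': "r \<noteq> []" "reduced_word r" "last r \<noteq> letter_inv (hd r)"
    using r(1) unfolding cyclically_reduced_def by auto
  show ?thesis
  proof (cases "reduced_word (x @ r)")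
    case True
    thus ?thesis using reduced_commute[OF x comm] by blast
  next
    case False
    have letters: "snd ` set (x @ r) \<subseteq> S" "snd ` set (r @ x) \<subseteq> S" using x(2) r(2) by auto
    have "word_eval (r @ x) = word_eval (x @ r)" using comm by (simp add: word_eval_append)
    hence "\<not> reduced_word (r @ x)"
      using reduced_word_if_same_value_length[OF _ letters(2,1)] False by auto
    moreover have "x \<noteq> []" using False r' x by (auto simp: reduced_word_append_iff)
    ultimately have "hd x = letter_inv (last r)" "x \<noteq> []"
      using r' x by (auto simp: reduced_word_append_iff)
    hence "hd r \<noteq> hd x" using r'(3) by auto
    have y: "reduced_word (word_inv x)" "snd ` set (word_inv x) \<subseteq> S"
      using x snd_set_word_inv[of x] by (auto simp: reduced_word_word_inv)
    have "word_eval (word_inv x) \<circ> word_eval r = word_eval r \<circ> word_eval (word_inv x)"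
      using commute_inv[OF bij_word_eval[OF bij_S x(2)] comm] word_eval_word_inv[OF bij_S x(2)]
      by simp
    moreover have "reduced_word (word_inv x @ r)"
      using y r' \<open>x \<noteq> []\<close> \<open>hd r \<noteq> hd x\<close> by (auto simp: reduced_word_append_iff last_word_inv)
    ultimately show ?thesis using reduced_commute[OF y] by blast
  qed
qed

lemma centralizer_cyclically_reduced:
  assumes "cyclically_reduced r" and "snd ` set r \<subseteq> S"
  shows "\<exists>c. bij c \<and>
    (\<forall>x\<in>G. x \<circ> word_eval r = word_eval r \<circ> x \<longrightarrow> (\<exists>n. x = c ^^ n \<or> x = inv c ^^ n))"
proof -
  have "r \<noteq> []" using assms(1) by (simp add: cyclically_reduced_def)
  then obtain \<rho> where \<rho>: "shortest_commuting r \<rho>" "set \<rho> \<subseteq> set r"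
    using shortest_commuting_exists by blast
  define c where "c = word_eval \<rho>"
  have \<rho>_letters: "snd ` set \<rho> \<subseteq> S" using \<rho>(2) assms(2) by blast
  have "bij c" unfolding c_def by (rule bij_word_eval[OF bij_S \<rho>_letters])
  moreover have "\<exists>n. x = c ^^ n \<or> x = inv c ^^ n"
    if "x \<in> G" "x \<circ> word_eval r = word_eval r \<circ> x" for x
  proof -
    obtain v where v: "reduced_word v" "snd ` set v \<subseteq> S" "word_eval v = x"
      using reduced_word_exists[OF \<open>x \<in> G\<close>] by blast
    from commute_with_cyclically_reduced[OF assms v(1,2)] that(2) v(3)
    consider "v @ r = r @ v" | "word_inv v @ r = r @ word_inv v" by blast
    thus ?thesis
    proof cases
      case 1
      then obtain n where "v = word_pow \<rho> n" using shortest_commuting_root[OF \<rho>(1) \<open>r \<noteq> []\<close>] by blast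
      hence "x = c ^^ n" using v(3) by (simp add: c_def word_eval_word_pow)
      thus ?thesis by blast
    next
      case 2
      then obtain n where "word_inv v = word_pow \<rho> n"
        using shortest_commuting_root[OF \<rho>(1) \<open>r \<noteq> []\<close>] by blast
      hence "inv x = c ^^ n"
        using v word_eval_word_inv[OF bij_S v(2)] by (simp add: c_def word_eval_word_pow)
      hence "x = inv (c ^^ n)" using bij_word_eval[OF bij_S v(2)] v(3) by (metis inv_inv_eq)
      thus ?thesis using inv_fn bij_word_eval[OF bij_S \<rho>_letters] by (auto simp: c_def)
    qed
  qed
  ultimately show ?thesis by blast
qed

text \<open>Write \<open>z = p r p\<^sup>-\<^sup>1\<close> with \<open>r\<close> cyclically reduced and conjugate by \<open>p\<close>.\<close>
lemma centralizer_cyclic: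
  assumes "z \<in> G" and "z \<noteq> id"
  shows "\<exists>c. bij c \<and> (\<forall>x\<in>G. x \<circ> z = z \<circ> x \<longrightarrow> (\<exists>n. x = c ^^ n \<or> x = inv c ^^ n))"
proof -
  obtain u where u: "reduced_word u" "snd ` set u \<subseteq> S" "word_eval u = z"
    using reduced_word_exists[OF assms(1)] by blast
  have "u \<noteq> []" using u assms(2) by auto
  then obtain p r where pr: "u = p @ r @ word_inv p" "cyclically_reduced r"
    using cyclic_decomposition[OF u(1)] by blast
  have p: "snd ` set p \<subseteq> S" and r: "snd ` set r \<subseteq> S" using u(2) pr(1) by auto
  define P where "P = word_eval p"
  have P: "P \<in> G" "bij P" unfolding P_def using word_eval_mem[OF p] bij_word_eval[OF bij_S p] by auto
  have z: "z = P \<circ> word_eval r \<circ> inv P"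
    using u(3) pr(1) p by (simp add: P_def word_eval_append word_eval_word_inv[OF bij_S] comp_assoc)
  obtain C where C: "bij C"
    and cent: "\<forall>x\<in>G. x \<circ> word_eval r = word_eval r \<circ> x \<longrightarrow> (\<exists>n. x = C ^^ n \<or> x = inv C ^^ n)"
    using centralizer_cyclically_reduced[OF pr(2) r] by blast
  define c where "c = P \<circ> C \<circ> inv P"
  have "bij c" using P(2) C by (simp add: c_def bij_comp bij_imp_bij_inv)
  moreover have "\<exists>n. x = c ^^ n \<or> x = inv c ^^ n" if x: "x \<in> G" "x \<circ> z = z \<circ> x" for x
  proof -
    have "inv P \<circ> x \<circ> P \<in> G" using x(1) P by (simp add: comp_mem inv_mem)
    moreover have "(inv P \<circ> x \<circ> P) \<circ> word_eval r = word_eval r \<circ> (inv P \<circ> x \<circ> P)"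
      using commute_conj[OF P(2)] x(2) z by blast
    ultimately obtain n where "inv P \<circ> x \<circ> P = C ^^ n \<or> inv P \<circ> x \<circ> P = inv C ^^ n"
      using cent by blast
    hence "P \<circ> (inv P \<circ> x \<circ> P) \<circ> inv P = c ^^ n
        \<or> P \<circ> (inv P \<circ> x \<circ> P) \<circ> inv P = (P \<circ> inv C \<circ> inv P) ^^ n"
      using conj_funpow[OF P(2)] by (auto simp: c_def)
    moreover have "P \<circ> (inv P \<circ> x \<circ> P) \<circ> inv P = x"
      using P(2) by (simp add: fun_eq_iff bij_is_surj surj_f_inv_f)
    moreover have "inv c = P \<circ> inv C \<circ> inv P"
      using P(2) C by (simp add: c_def o_inv_distrib bij_comp bij_imp_bij_inv inv_inv_eq comp_assoc)
    ultimately show ?thesis by auto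
  qed
  ultimately show ?thesis by blast
qed

end

section \<open>Margulis groups\<close>

lemma acts_properly_translations_finite:
  assumes "acts_properly G"
  shows "finite {v. transl v \<in> G \<and> norm v \<le> r}"
proof -
  let ?K = "cball (0::pt) r"
  have "finite {f\<in>G. f ` ?K \<inter> ?K \<noteq> {}}"
    using assms compact_cball unfolding acts_properly_def by blast
  moreover have "transl ` {v. transl v \<in> G \<and> norm v \<le> r} \<subseteq> {f\<in>G. f ` ?K \<inter> ?K \<noteq> {}}"
  proof clarify
    fix v assume "transl v \<in> G" "norm v \<le> r" "transl v ` ?K \<inter> ?K = {}"
    moreover have "0 \<in> ?K" using \<open>norm v \<le> r\<close> norm_ge_zero[of v] by (simp del: norm_ge_zero)
    hence "v \<in> transl v ` ?K" using image_eqI[of v "transl v" 0] by (simp add: transl_def)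
    ultimately show False using \<open>norm v \<le> r\<close> by auto
  qed
  ultimately have "finite (transl ` {v. transl v \<in> G \<and> norm v \<le> r})" by (rule finite_subset[rotated])
  moreover have "inj_on transl {v. transl v \<in> G \<and> norm v \<le> r}" by (simp add: inj_on_def transl_eq_iff)
  ultimately show ?thesis by (rule finite_imageD)
qed

lemma transl_int_powers_parallel:
  assumes "bij c" and "u \<noteq> 0"
    and "transl u = c ^^ m \<or> transl u = inv c ^^ m" and "transl v = c ^^ n \<or> transl v = inv c ^^ n"
  shows "\<exists>\<alpha>. v = \<alpha> *\<^sub>R u"
proof -
  have "m \<noteq> 0"
  proof
    assume "m = 0"
    hence "transl u = id" using assms(3) by auto
    thus False using assms(2) by (simp add: transl_eq_id_iff)
  qed
  have "transl u ^^ n = transl v ^^ m \<or> transl u ^^ n = inv (transl v ^^ m)"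
    using int_powers_relation[OF assms(1,3,4)] .
  hence "real n *\<^sub>R u = real m *\<^sub>R v \<or> (- real n) *\<^sub>R u = real m *\<^sub>R v"
    by (auto simp: funpow_transl inv_transl transl_eq_iff)
  moreover have "v = (t / real m) *\<^sub>R u" if "t *\<^sub>R u = real m *\<^sub>R v" for t
  proof -
    have "v = (1 / real m) *\<^sub>R (real m *\<^sub>R v)" using \<open>m \<noteq> 0\<close> by simp
    also have "\<dots> = (t / real m) *\<^sub>R u" using that[symmetric] by simp
    finally show ?thesis .
  qed
  ultimately show ?thesis by blast
qed

locale margulis =
  fixes G :: "(pt \<Rightarrow> pt) set"
  assumes margulis: "margulis_group G"
begin

lemma isometry_group: "isometry_group G"
  using margulis by (simp add: margulis_group_def)

lemma mem_imp_aff: "f \<in> G \<Longrightarrow> \<exists>A b. A \<in> O21 \<and> f = aff A b"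
  using isometry_group lorentz_isometry_aff by (simp add: isometry_group_def)

lemma bij_mem: "f \<in> G \<Longrightarrow> bij f"
  using mem_imp_aff bij_aff by blast

lemma comp_mem: "f \<in> G \<Longrightarrow> g \<in> G \<Longrightarrow> f \<circ> g \<in> G"
  using isometry_group by (simp add: isometry_group_def)

lemma inv_mem: "f \<in> G \<Longrightarrow> inv f \<in> G"
  using isometry_group by (simp add: isometry_group_def)

lemma conj_mem: "h \<in> G \<Longrightarrow> f \<in> G \<Longrightarrow> h \<circ> f \<circ> inv h \<in> G"
  by (simp add: comp_mem inv_mem)

lemma fixed_point_imp_id: "f \<in> G \<Longrightarrow> f x = x \<Longrightarrow> f = id"
  using margulis unfolding margulis_group_def acts_freely_def by blast

lemma involution_imp_id:
  assumes "f \<in> G" and "f \<circ> f = id"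
  shows "f = id"
proof -
  obtain A b where "f = aff A b" using mem_imp_aff[OF assms(1)] by blast
  thus ?thesis using aff_involution_fixed_point fixed_point_imp_id[OF assms(1)] assms(2) by blast
qed

lemma centralizer_cyclic:
  assumes "z \<in> G" and "z \<noteq> id"
  shows "\<exists>c. bij c \<and> (\<forall>x\<in>G. x \<circ> z = z \<circ> x \<longrightarrow> (\<exists>n. x = c ^^ n \<or> x = inv c ^^ n))"
proof -
  obtain S where "free_on S G" using margulis unfolding margulis_group_def free_group_def by blast
  moreover have "\<forall>s\<in>S. bij s" using calculation bij_mem unfolding free_on_def by (meson subsetD)
  ultimately interpret free_bij_group S G by unfold_locales
  show ?thesis by (rule centralizer_cyclic[OF assms])
qed

text \<open>\<open>A\<close> has eigenvalue \<open>1\<close> as \<open>aff A b\<close> has no fixed point, so \<open>A\<^sup>2 = 1\<close>.\<close>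
lemma orientation_reversing_square_transl:
  assumes g: "aff A b \<in> G" and A: "A \<in> O21" "det A = -1"
  obtains w where "w \<noteq> 0" "transl w \<in> G"
proof -
  have "aff A b \<noteq> id" using A(2) by (auto simp: aff_eq_id_iff)
  hence "\<nexists>x. aff A b x = x" using fixed_point_imp_id[OF g] by blast
  then obtain u where "u \<noteq> 0" "A *v u = u" using aff_fixed_point_exists by blast
  hence "aff A b \<circ> aff A b = transl (A *v b + b)"
    using O21_det_neg_fixed_vector_involution[OF A] aff_square_transl by blast
  moreover have "aff A b \<circ> aff A b \<noteq> id"
    using involution_imp_id[OF g] \<open>aff A b \<noteq> id\<close> by blast
  ultimately have "A *v b + b \<noteq> 0" "transl (A *v b + b) \<in> G"
    using comp_mem[OF g g] by (auto simp: transl_0)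
  thus ?thesis using that by blast
qed

end

locale margulis_transl = margulis +
  fixes w :: pt
  assumes w_nonzero: "w \<noteq> 0" and transl_mem: "transl w \<in> G"
begin

lemma centralizer_transl:
  "\<exists>c m. bij c \<and> (transl w = c ^^ m \<or> transl w = inv c ^^ m) \<and>
     (\<forall>x\<in>G. x \<circ> transl w = transl w \<circ> x \<longrightarrow> (\<exists>n. x = c ^^ n \<or> x = inv c ^^ n))"
proof -
  have "transl w \<noteq> id" using w_nonzero by (simp add: transl_eq_id_iff)
  then obtain c where "bij c"
    and cent: "\<forall>x\<in>G. x \<circ> transl w = transl w \<circ> x \<longrightarrow> (\<exists>n. x = c ^^ n \<or> x = inv c ^^ n)"
    using centralizer_cyclic[OF transl_mem] by blast
  moreover obtain m where "transl w = c ^^ m \<or> transl w = inv c ^^ m" using cent transl_mem by blast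
  ultimately show ?thesis by blast
qed

lemma linear_part_eigenvector:
  assumes h: "aff B b \<in> G" and B: "B \<in> O21"
  shows "\<exists>\<alpha>. B *v w = \<alpha> *\<^sub>R w"
proof -
  obtain c m where c: "bij c" "transl w = c ^^ m \<or> transl w = inv c ^^ m"
    and cent: "\<forall>x\<in>G. x \<circ> transl w = transl w \<circ> x \<longrightarrow> (\<exists>n. x = c ^^ n \<or> x = inv c ^^ n)"
    using centralizer_transl by blast
  have "transl (B *v w) \<in> G" using conj_mem[OF h transl_mem] aff_conj_transl[OF B] by simp
  moreover have "transl (B *v w) \<circ> transl w = transl w \<circ> transl (B *v w)"
    by (simp add: transl_comp add.commute)
  ultimately obtain n where "transl (B *v w) = c ^^ n \<or> transl (B *v w) = inv c ^^ n"
    using cent by blast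
  thus ?thesis using transl_int_powers_parallel[OF c(1) w_nonzero c(2)] by blast
qed

text \<open>Otherwise the translations by \<open>\<alpha>\<^sup>k w\<close>, the conjugates of \<open>t\<^sub>w\<close> by \<open>h\<^sup>k\<close>, contradict properness.\<close>
lemma linear_part_eigenvalue_ge_1:
  assumes h: "aff B b \<in> G" and B: "B \<in> O21" and eigen: "B *v w = \<alpha> *\<^sub>R w"
  shows "1 \<le> \<bar>\<alpha>\<bar>"
proof (rule ccontr)
  assume "\<not> 1 \<le> \<bar>\<alpha>\<bar>"
  moreover have "\<alpha> \<noteq> 0" using O21_invertible[OF B, of w] eigen w_nonzero by auto
  ultimately have \<alpha>: "0 < \<bar>\<alpha>\<bar>" "\<bar>\<alpha>\<bar> < 1" by auto
  have mem: "transl ((\<alpha> ^ k) *\<^sub>R w) \<in> G" for k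
  proof (induction k)
    case (Suc k)
    have "transl ((\<alpha> ^ Suc k) *\<^sub>R w) = aff B b \<circ> transl ((\<alpha> ^ k) *\<^sub>R w) \<circ> inv (aff B b)"
      using aff_conj_transl[OF B] eigen by (simp add: matrix_vector_mult_scaleR mult.commute)
    thus ?case using conj_mem[OF h Suc.IH] by (simp only:)
  qed (use transl_mem in simp)
  have "inj (\<lambda>k. (\<alpha> ^ k) *\<^sub>R w)"
  proof (rule injI)
    fix k j assume "(\<alpha> ^ k) *\<^sub>R w = (\<alpha> ^ j) *\<^sub>R w"
    hence "\<bar>\<alpha>\<bar> ^ k = \<bar>\<alpha>\<bar> ^ j" using w_nonzero by (simp add: power_abs[symmetric])
    thus "k = j" using \<alpha> power_inject_exp'[of "\<bar>\<alpha>\<bar>"] by simp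
  qed
  hence "infinite (range (\<lambda>k. (\<alpha> ^ k) *\<^sub>R w))" by (rule range_inj_infinite)
  moreover have "range (\<lambda>k. (\<alpha> ^ k) *\<^sub>R w) \<subseteq> {v. transl v \<in> G \<and> norm v \<le> norm w}"
    using mem \<alpha> by (auto simp: power_abs power_le_one mult_left_le_one_le)
  moreover have "finite {v. transl v \<in> G \<and> norm v \<le> norm w}"
    using margulis acts_properly_translations_finite unfolding margulis_group_def by blast
  ultimately show False using finite_subset by blast
qed

lemma linear_part_fixes_or_flips:
  assumes h: "aff B b \<in> G" and B: "B \<in> O21"
  shows "B *v w = w \<or> B *v w = - w"
proof -
  obtain \<alpha> where \<alpha>: "B *v w = \<alpha> *\<^sub>R w" using linear_part_eigenvector[OF assms] by blast
  obtain B' b' where B': "B' \<in> O21" "inv (aff B b) = aff B' b'" using mem_imp_aff[OF inv_mem[OF h]] by blast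
  obtain \<beta> where \<beta>: "B' *v w = \<beta> *\<^sub>R w"
    using linear_part_eigenvector[of B' b'] inv_mem[OF h] B' by auto
  have "inv (aff B b) \<circ> aff B b = id" using bij_mem[OF h] by (simp add: bij_is_inj)
  hence "aff (B' ** B) (B' *v b + b') = id" by (simp add: B'(2) aff_comp)
  hence "B' ** B = mat 1" by (simp add: aff_eq_id_iff)
  hence "1 *\<^sub>R w = B' *v (B *v w)" by (simp add: matrix_vector_mul_assoc)
  also have "\<dots> = (\<alpha> * \<beta>) *\<^sub>R w" using \<alpha> \<beta> by (simp add: matrix_vector_mult_scaleR)
  finally have "\<alpha> * \<beta> = 1" using w_nonzero by (simp only: scaleR_cancel_right) simp
  moreover have "1 \<le> \<bar>\<alpha>\<bar>" using linear_part_eigenvalue_ge_1[OF h B \<alpha>] .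
  moreover have "1 \<le> \<bar>\<beta>\<bar>" using linear_part_eigenvalue_ge_1 inv_mem[OF h] B' \<beta> by simp
  hence "\<bar>\<alpha>\<bar> * 1 \<le> \<bar>\<alpha>\<bar> * \<bar>\<beta>\<bar>" by (rule mult_left_mono) simp
  ultimately have "\<bar>\<alpha>\<bar> = 1" by (simp add: abs_mult[symmetric])
  thus ?thesis using \<alpha> by (cases "\<alpha> \<ge> 0") auto
qed

text \<open>
  If \<open>h\<close> inverts \<open>t\<^sub>w\<close>, then \<open>h\<^sup>2 = c\<^sup>\<plusminus>\<^sup>k\<close> centralizes it, so \<open>t\<^sub>w\<^sup>k = h\<^sup>\<plusminus>\<^sup>2\<^sup>m\<close> where \<open>t\<^sub>w = c\<^sup>\<plusminus>\<^sup>m\<close>;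
  as \<open>h\<close> both commutes with and inverts \<open>t\<^sub>w\<^sup>k\<close>, \<open>k = 0\<close> and \<open>h\<close> is an involution.
\<close>
lemma linear_part_not_flips:
  assumes h: "aff B b \<in> G" and B: "B \<in> O21"
  shows "B *v w \<noteq> - w"
proof
  assume flip: "B *v w = - w"
  let ?h = "aff B b" and ?H = "aff B b \<circ> aff B b"
  obtain c m where c: "bij c" "transl w = c ^^ m \<or> transl w = inv c ^^ m"
    and cent: "\<forall>x\<in>G. x \<circ> transl w = transl w \<circ> x \<longrightarrow> (\<exists>n. x = c ^^ n \<or> x = inv c ^^ n)"
    using centralizer_transl by blast
  have "?H \<circ> transl w = transl w \<circ> ?H" using flip by (rule aff_square_comp_transl_flip)
  then obtain k where k: "?H = c ^^ k \<or> ?H = inv c ^^ k" using cent comp_mem[OF h h] by blast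
  hence "transl w ^^ k = ?H ^^ m \<or> transl w ^^ k = inv (?H ^^ m)"
    using int_powers_relation[OF c(1,2)] by blast
  moreover have Hm: "?h \<circ> ?H ^^ m = ?H ^^ m \<circ> ?h" by (rule commute_funpow) (simp add: comp_assoc)
  moreover have "?h \<circ> inv (?H ^^ m) = inv (?H ^^ m) \<circ> ?h"
    using commute_inv[OF _ Hm[symmetric]] bij_mem[OF comp_mem[OF h h]] by (simp add: bij_fn)
  ultimately have "?h \<circ> transl w ^^ k = transl w ^^ k \<circ> ?h" by auto
  hence "?h \<circ> transl (real k *\<^sub>R w) = transl (real k *\<^sub>R w) \<circ> ?h" by (simp only: funpow_transl)
  hence "real k *\<^sub>R w = 0" by (rule aff_comp_transl_flip[OF flip])
  hence "?H = id" using k w_nonzero by simp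
  hence "B = mat 1" using involution_imp_id[OF h] by (simp add: aff_eq_id_iff)
  hence "- w = w" using flip by (metis matrix_vector_mul_lid)
  thus False using w_nonzero by (simp add: vec_eq_iff)
qed

lemma commute_transl:
  assumes "h \<in> G"
  shows "h \<circ> transl w = transl w \<circ> h"
proof -
  obtain B b where B: "B \<in> O21" "h = aff B b" using mem_imp_aff[OF assms] by blast
  hence "B *v w = w" using linear_part_fixes_or_flips linear_part_not_flips assms by blast
  thus ?thesis using aff_comp_transl[of B b w] B(2) by simp
qed

lemma abelian:
  assumes "f \<in> G" "g \<in> G"
  shows "f \<circ> g = g \<circ> f"
proof -
  obtain c where "bij c"
    and cent: "\<forall>x\<in>G. x \<circ> transl w = transl w \<circ> x \<longrightarrow> (\<exists>n. x = c ^^ n \<or> x = inv c ^^ n)"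
    using centralizer_transl by blast
  obtain m where "f = c ^^ m \<or> f = inv c ^^ m" using cent commute_transl assms(1) by blast
  moreover obtain n where "g = c ^^ n \<or> g = inv c ^^ n" using cent commute_transl assms(2) by blast
  ultimately show ?thesis by (rule int_powers_commute[OF \<open>bij c\<close>])
qed

end

theorem lemma4p1:
  fixes G :: "(real ^ 3 \<Rightarrow> real ^ 3) set"
  assumes "margulis_group G" and "nonabelian G"
  shows "orientable_quotient G"
proof (rule ccontr)
  interpret margulis G by unfold_locales fact
  assume "\<not> orientable_quotient G"
  then obtain g where "g \<in> G" and g: "\<And>A b. g = (\<lambda>x. A *v x + b) \<Longrightarrow> \<not> det A > 0"
    unfolding orientable_quotient_def by blast
  obtain A b where A: "A \<in> O21" "g = aff A b" using mem_imp_aff[OF \<open>g \<in> G\<close>] by blast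
  have "\<not> det A > 0" using g A(2) by (simp add: aff_def)
  hence "det A = -1" using O21_det[OF A(1)] by auto
  then obtain w where "w \<noteq> 0" "transl w \<in> G"
    using orientation_reversing_square_transl A \<open>g \<in> G\<close> by blast
  then interpret margulis_transl G w by unfold_locales
  show False using assms(2) abelian unfolding nonabelian_def by blast
qed
end
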